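(* Let $\mathbf z^{(\varepsilon)}=(z^{(\varepsilon)}_i)_{i=1}^{N(\varepsilon)}$, $0<\varepsilon<1$, be centered infinitesimally rigid crystals such that $|z^{(\varepsilon)}_i|\le R\varepsilon^{-1}$ for some $R>0$ and all $i,\varepsilon$, $\varepsilon^d\sum_i\delta_{\varepsilon z^{(\varepsilon)}_i}\Rightarrow\rho(y)dy$ weakly as $\varepsilon\downarrow0$, $\int\rho>0$, and $\bar Q=(\int y^\alpha y^\beta\rho(y)dy)_{\alpha\beta}$ is diagonal with diagonal entries $\bar q^\alpha$. Then: (i) for every $\nu>0$ there exists $\varepsilon_0>0$ such that $\sup_{0<\varepsilon\le\varepsilon_0}\sup_{\mathbf x\in\mathcal M^{(\varepsilon)}_\infty(\varepsilon^{\nu-1}\wedge\bar c(\mathbf z^{(\varepsilon)}))}\|\Phi^{(\varepsilon)}(\mathbf x)^{-1}\|<\infty$; (ii) for every $\nu>0$, $\lim_{\varepsilon\downarrow0}\sup_{\mathbf x\in\mathcal M^{(\varepsilon)}_\infty(\varepsilon^{\nu-1}\wedge\bar c(\mathbf z^{(\varepsilon)}))}\|\Phi^{(\varepsilon)}(\mathbf x)^{-1}-\Phi^{-1}\|=0$.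
   Context: Let $d\ge1$, $a>0$, $b>0$. A crystal is $\mathbf z=(z_i)_{i=1}^N\in(\mathbb R^d)^N$ with $|z_i-z_j|=a$ or $>b$ for $i\ne j$; neighboring pairs $\langle i,j\rangle$: $|z_i-z_j|=a$; centered: $\sum_iz_i=0$; infinitesimally rigid: $\sum_{\langle i,j\rangle}(h_i-h_j,z_i-z_j)^2=0$ only for $\mathbf h=(Xz_i+h)_i$ with $X\in\mathfrak{so}(d)$, $h\in\mathbb R^d$. $\mathcal M=\{(\theta z_i+\eta)_i:\theta\in SO(d),\eta\in\mathbb R^d\}$; $\bar c(\mathbf z)>0$ is a constant such that each $\mathbf x$ with $\inf_{\mathbf y\in\mathcal M}\max_i|x_i-y_i|\le\bar c(\mathbf z)$ has a unique minimizer $\mathbf z(\mathbf x)\in\mathcal M$ of $(\sum_i|x_i-y_i|^2)^{1/2}$; $\mathcal M_\infty(c)=\{\mathbf x:\max_i|x_i-\mathbf z(\mathbf x)_i|\le c\}$, written $\mathcal M^{(\varepsilon)}_\infty(c)$ for $\mathbf z=\mathbf z^{(\varepsilon)}$; $\theta(\mathbf x)\in SO(d)$ is defined by $\mathbf z(\mathbf x)=(\theta(\mathbf x)z^{(\varepsilon)}_i+\eta)_i$. $M(d)$ carries $(X,Y)=\mathrm{Tr}(X\,{}^tY)$, $|X|=\sqrt{(X,X)}$; $\mathrm{Proj}X=(X-{}^tX)/2$. $\kappa=d+2$; $Q^{(\varepsilon)}(\mathbf x)=\sum_iz^{(\varepsilon)}_i\otimes x_i$ with $(e\otimes\tilde e)^{\alpha\beta}=e^\alpha\tilde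 e^\beta$. Operators on $\mathfrak{so}(d)$: $\Phi X=\mathrm{Proj}(\bar QX)$ and $\Phi^{(\varepsilon)}(\mathbf x)X=\mathrm{Proj}(\varepsilon^\kappa Q^{(\varepsilon)}(\mathbf x)\theta(\mathbf x)X)$; $\|\cdot\|$ is the operator norm induced by $|\cdot|$. *)

theory Defs
  imports "HOL-Analysis.Analysis"
begin

text \<open>Configurations of N points in R^d are functions nat => real^'d; only indices i < N matter.\<close>

definition SOd :: "(real^'d^'d) set" where
  "SOd = {\<theta>. orthogonal_matrix \<theta> \<and> det \<theta> = 1}"

definition sod :: "(real^'d^'d) set" where
  "sod = {X. transpose X = - X}"

definition Proj :: "real^'d^'d \<Rightarrow> real^'d^'d" where
  "Proj X = (1/2) *\<^sub>R (X - transpose X)"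

definition crystal :: "real \<Rightarrow> real \<Rightarrow> nat \<Rightarrow> (nat \<Rightarrow> real^'d) \<Rightarrow> bool" where
  "crystal a b N z \<longleftrightarrow>
     (\<forall>i<N. \<forall>j<N. i \<noteq> j \<longrightarrow> norm (z i - z j) = a \<or> norm (z i - z j) > b)"

definition centered :: "nat \<Rightarrow> (nat \<Rightarrow> real^'d) \<Rightarrow> bool" where
  "centered N z \<longleftrightarrow> (\<Sum>i<N. z i) = 0"

definition neighbors :: "real \<Rightarrow> nat \<Rightarrow> (nat \<Rightarrow> real^'d) \<Rightarrow> (nat \<times> nat) set" where
  "neighbors a N z = {(i, j). i < N \<and> j < N \<and> i < j \<and> norm (z i - z j) = a}"

definition inf_rigid :: "real \<Rightarrow> nat \<Rightarrow> (nat \<Rightarrow> real^'d) \<Rightarrow> bool" where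
  "inf_rigid a N z \<longleftrightarrow>
     (\<forall>h :: nat \<Rightarrow> real^'d.
        (\<Sum>(i, j)\<in>neighbors a N z. ((h i - h j) \<bullet> (z i - z j))\<^sup>2) = 0 \<longrightarrow>
        (\<exists>X\<in>sod. \<exists>h0. \<forall>i<N. h i = X *v z i + h0))"

definition rig_motions :: "nat \<Rightarrow> (nat \<Rightarrow> real^'d) \<Rightarrow> (nat \<Rightarrow> real^'d) set" where
  "rig_motions N z = {(\<lambda>i. if i < N then \<theta> *v z i + \<eta> else 0) | \<theta> \<eta>. \<theta> \<in> SOd}"

definition l2dist :: "nat \<Rightarrow> (nat \<Rightarrow> real^'d) \<Rightarrow> (nat \<Rightarrow> real^'d) \<Rightarrow> real" where
  "l2dist N x y = sqrt (\<Sum>i<N. (norm (x i - y i))\<^sup>2)"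

definition maxdist :: "nat \<Rightarrow> (nat \<Rightarrow> real^'d) \<Rightarrow> (nat \<Rightarrow> real^'d) \<Rightarrow> real" where
  "maxdist N x y = Max (insert 0 ((\<lambda>i. norm (x i - y i)) ` {..<N}))"

definition dist_M :: "nat \<Rightarrow> (nat \<Rightarrow> real^'d) \<Rightarrow> (nat \<Rightarrow> real^'d) \<Rightarrow> real" where
  "dist_M N z x = Inf ((\<lambda>y. maxdist N x y) ` rig_motions N z)"

definition cbar_ok :: "nat \<Rightarrow> (nat \<Rightarrow> real^'d) \<Rightarrow> real \<Rightarrow> bool" where
  "cbar_ok N z c \<longleftrightarrow> c > 0 \<and>
     (\<forall>x. dist_M N z x \<le> c \<longrightarrow>
        (\<exists>!y. y \<in> rig_motions N z \<and> (\<forall>y'\<in>rig_motions N z. l2dist N x y \<le> l2dist N x y')))"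

definition proj_M :: "nat \<Rightarrow> (nat \<Rightarrow> real^'d) \<Rightarrow> (nat \<Rightarrow> real^'d) \<Rightarrow> (nat \<Rightarrow> real^'d)" where
  "proj_M N z x = (THE y. y \<in> rig_motions N z \<and> (\<forall>y'\<in>rig_motions N z. l2dist N x y \<le> l2dist N x y'))"

text \<open>M_infty(c), relative to the admissible constant cb on whose domain z(x) is defined.\<close>
definition Minf :: "nat \<Rightarrow> (nat \<Rightarrow> real^'d) \<Rightarrow> real \<Rightarrow> real \<Rightarrow> (nat \<Rightarrow> real^'d) set" where
  "Minf N z cb c = {x. dist_M N z x \<le> cb \<and> maxdist N x (proj_M N z x) \<le> c}"

definition theta_of :: "nat \<Rightarrow> (nat \<Rightarrow> real^'d) \<Rightarrow> (nat \<Rightarrow> real^'d) \<Rightarrow> real^'d^'d" where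
  "theta_of N z x = (SOME \<theta>. \<theta> \<in> SOd \<and> (\<exists>\<eta>. \<forall>i<N. proj_M N z x i = \<theta> *v z i + \<eta>))"

definition Qmat :: "nat \<Rightarrow> (nat \<Rightarrow> real^'d) \<Rightarrow> (nat \<Rightarrow> real^'d) \<Rightarrow> real^'d^'d" where
  "Qmat N z x = (\<chi> \<alpha> \<beta>. \<Sum>i<N. z i $ \<alpha> * x i $ \<beta>)"

definition Phi_eps :: "real \<Rightarrow> nat \<Rightarrow> (nat \<Rightarrow> real^'d) \<Rightarrow> (nat \<Rightarrow> real^'d)
    \<Rightarrow> real^'d^'d \<Rightarrow> real^'d^'d" where
  "Phi_eps eps N z x X =
     Proj (((eps ^ (CARD('d) + 2)) *\<^sub>R Qmat N z x) ** theta_of N z x ** X)"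

definition Phi :: "real^'d^'d \<Rightarrow> real^'d^'d \<Rightarrow> real^'d^'d" where
  "Phi Qb X = Proj (Qb ** X)"

definition Qbar :: "(real^'d \<Rightarrow> real) \<Rightarrow> real^'d^'d" where
  "Qbar \<rho> = (\<chi> \<alpha> \<beta>. LINT y|lborel. y $ \<alpha> * y $ \<beta> * \<rho> y)"

text \<open>Inverse of an operator on so(d), and the operator norm induced by the Frobenius norm
  (the norm of real^'d^'d is the Frobenius norm sqrt(Tr(X X^t))).\<close>
definition so_inv :: "(real^'d^'d \<Rightarrow> real^'d^'d) \<Rightarrow> real^'d^'d \<Rightarrow> real^'d^'d" where
  "so_inv L = inv_into sod L"

definition so_opnorm :: "(real^'d^'d \<Rightarrow> real^'d^'d) \<Rightarrow> real" where
  "so_opnorm T = Sup ((\<lambda>X. norm (T X)) ` {X \<in> sod. norm X \<le> 1})"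

end

theory Submission
  imports Defs
begin

text \<open>Write \<open>Phi_eps \<epsilon> x = Phi (Q\<^sub>\<epsilon>(x))\<close> with \<open>Q\<^sub>\<epsilon>(x) = \<epsilon>\<^bsup>d+2\<^esup> Q(x) \<theta>(x)\<close>.
  Because z is centered, \<open>Q(y) \<theta> = Q(z)\<close> for the rigid motion \<open>y = z(x)\<close> with rotation \<open>\<theta>\<close>,
  so in Frobenius norm \<open>Q\<^sub>\<epsilon>(x)\<close> differs from \<open>\<epsilon>\<^bsup>d+2\<^esup> Q(z)\<close> by at most
  \<open>\<epsilon>\<^bsup>d+2\<^esup> N (R/\<epsilon>) \<epsilon>\<^bsup>\<nu>-1\<^esup> = R (\<epsilon>\<^bsup>d\<^esup> N) \<epsilon>\<^bsup>\<nu>\<^esup> \<rightarrow> 0\<close>, uniformly on \<open>M\<^sub>\<infinity>\<close>.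
  Weak convergence and the bounded support give \<open>\<epsilon>\<^bsup>d+2\<^esup> Q(z) \<rightarrow> Qbar\<close>; Qbar is diagonal
  with positive entries (rho has positive mass and hyperplanes are null), hence
  \<open>(Qbar X, X) \<ge> q |X|\<^sup>2\<close> on so(d). Such coercivity survives perturbations of size q/2, and
  for a coercive Q the operator \<open>Phi Q\<close> is invertible on so(d) with
  \<open>\<parallel>(Phi Q)\<^sup>-\<^sup>1\<parallel> \<le> 1/q\<close> and \<open>\<parallel>(Phi Q)\<^sup>-\<^sup>1 - (Phi Q')\<^sup>-\<^sup>1\<parallel> \<le> |Q - Q'| / (q q')\<close>.\<close>

section \<open>Frobenius norm of matrices\<close>

lemma norm_squared_cart: "(norm v)\<^sup>2 = (\<Sum>i\<in>UNIV. (v $ i)\<^sup>2)" for v :: "real^'n"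
  unfolding power2_norm_eq_inner by (simp add: inner_vec_def power2_eq_square)

lemma inner_matrix: "A \<bullet> B = (\<Sum>i\<in>UNIV. \<Sum>j\<in>UNIV. A $ i $ j * B $ i $ j)"
  by (simp add: inner_vec_def)

lemma norm_matrix_squared: "(norm (M :: real^'n^'m))\<^sup>2 = (\<Sum>i\<in>UNIV. \<Sum>j\<in>UNIV. (M $ i $ j)\<^sup>2)"
  unfolding power2_norm_eq_inner by (simp add: inner_vec_def power2_eq_square)

lemma matrix_diff_rdistrib: "(A - B) ** C = A ** C - B ** (C :: 'a::ring_1^'p^'n)"
  by (simp add: vec_eq_iff matrix_matrix_mult_def sum_subtractf left_diff_distrib)

lemma transpose_add: "transpose (A + B) = transpose A + transpose B"
  by (simp add: vec_eq_iff transpose_def)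

lemma inner_transpose: "transpose A \<bullet> B = A \<bullet> transpose (B :: real^'m^'n)"
  unfolding inner_matrix transpose_def by (subst sum.swap) simp

lemma norm_matrix_mult_le:
  fixes A :: "real^'k^'m" and B :: "real^'n^'k"
  shows "norm (A ** B) \<le> norm A * norm B"
proof -
  have entry: "((A ** B) $ i $ j)\<^sup>2 \<le> (norm (A $ i))\<^sup>2 * (norm (column j B))\<^sup>2" for i j
  proof -
    have "(A ** B) $ i $ j = A $ i \<bullet> column j B"
      by (simp add: matrix_matrix_mult_def inner_vec_def column_def)
    then have "\<bar>(A ** B) $ i $ j\<bar> \<le> norm (A $ i) * norm (column j B)"
      by (simp add: Cauchy_Schwarz_ineq2)
    from power_mono[OF this abs_ge_zero, of 2] show ?thesis
      by (simp add: power_mult_distrib)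
  qed
  have rows: "(\<Sum>i\<in>UNIV. (norm (A $ i))\<^sup>2) = (norm A)\<^sup>2"
    by (simp add: norm_matrix_squared norm_squared_cart)
  have "(\<Sum>j\<in>UNIV. (norm (column j B))\<^sup>2) = (\<Sum>j\<in>UNIV. \<Sum>k\<in>UNIV. (B $ k $ j)\<^sup>2)"
    by (simp add: norm_squared_cart column_def)
  also have "\<dots> = (norm B)\<^sup>2"
    unfolding norm_matrix_squared by (rule sum.swap)
  finally have columns: "(\<Sum>j\<in>UNIV. (norm (column j B))\<^sup>2) = (norm B)\<^sup>2" .
  have "(norm (A ** B))\<^sup>2 = (\<Sum>i\<in>UNIV. \<Sum>j\<in>UNIV. ((A ** B) $ i $ j)\<^sup>2)"
    by (rule norm_matrix_squared)
  also have "\<dots> \<le> (\<Sum>i\<in>UNIV. \<Sum>j\<in>UNIV. (norm (A $ i))\<^sup>2 * (norm (column j B))\<^sup>2)"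
    by (intro sum_mono entry)
  also have "\<dots> = (\<Sum>i\<in>UNIV. (norm (A $ i))\<^sup>2) * (\<Sum>j\<in>UNIV. (norm (column j B))\<^sup>2)"
    by (rule sum_product[symmetric])
  also have "\<dots> = (norm A * norm B)\<^sup>2"
    by (simp add: rows columns power_mult_distrib)
  finally show ?thesis
    by (rule power2_le_imp_le) simp
qed

lemma norm_matrix_mult_orthogonal:
  fixes A :: "real^'n^'m"
  assumes "orthogonal_matrix \<theta>"
  shows "norm (A ** \<theta>) = norm A"
proof -
  have row: "(A ** \<theta>) $ i = transpose \<theta> *v A $ i" for i
    by (simp add: vec_eq_iff matrix_matrix_mult_def matrix_vector_mult_def transpose_def mult.commute)
  have "orthogonal_transformation (\<lambda>v. transpose \<theta> *v v)"
    using assms unfolding orthogonal_transformation_matrix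
    by (simp add: matrix_vector_mul_linear del: transpose_matrix_vector)
  then have "norm ((A ** \<theta>) $ i) = norm (A $ i)" for i
    unfolding row by (rule orthogonal_transformation_norm)
  then show ?thesis
    by (simp add: norm_vec_def)
qed

definition outer_prod :: "real^'m \<Rightarrow> real^'n \<Rightarrow> real^'n^'m" where
  "outer_prod u v = (\<chi> \<alpha> \<beta>. u $ \<alpha> * v $ \<beta>)"

lemma norm_outer_prod: "norm (outer_prod u v) = norm u * norm v"
proof -
  have "(norm (outer_prod u v))\<^sup>2 = (\<Sum>\<alpha>\<in>UNIV. \<Sum>\<beta>\<in>UNIV. (u $ \<alpha>)\<^sup>2 * (v $ \<beta>)\<^sup>2)"
    by (simp add: norm_matrix_squared outer_prod_def power_mult_distrib)
  also have "\<dots> = (norm u * norm v)\<^sup>2"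
    by (simp add: norm_squared_cart power_mult_distrib sum_product)
  finally show ?thesis
    by (simp add: power2_eq_iff_nonneg)
qed

section \<open>The projection onto so(d) and the operator Phi\<close>

lemma Proj_component: "Proj A $ i $ j = (A $ i $ j - A $ j $ i) / 2"
  by (simp add: Proj_def transpose_def)

lemma Proj_in_sod: "Proj A \<in> sod"
  by (simp add: sod_def vec_eq_iff transpose_def Proj_component field_simps)

lemma subspace_sod: "subspace sod"
proof -
  have "transpose 0 = (0 :: 'b::zero^'n^'m)"
    by (simp add: vec_eq_iff transpose_def)
  then show ?thesis
    unfolding subspace_def sod_def by (simp add: transpose_add transpose_scalar)
qed

lemma linear_Proj: "linear Proj"
  by (rule linearI) (auto simp: Proj_def transpose_def vec_eq_iff algebra_simps)

lemma inner_Proj_sod: "X \<in> sod \<Longrightarrow> Proj A \<bullet> X = A \<bullet> X"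
  by (simp add: Proj_def sod_def inner_diff_left inner_transpose)

lemma norm_Proj_le: "norm (Proj A) \<le> norm A"
proof -
  have "norm (Proj A) ^ 2 = A \<bullet> Proj A"
    by (simp add: power2_norm_eq_inner inner_Proj_sod[OF Proj_in_sod] inner_commute)
  also have "\<dots> \<le> norm A * norm (Proj A)"
    by (rule norm_cauchy_schwarz)
  finally have "norm (Proj A) * norm (Proj A) \<le> norm A * norm (Proj A)"
    by (simp add: power2_eq_square)
  then show ?thesis
    by (metis mult_right_le_imp_le norm_ge_zero order_le_less)
qed

definition sod_coercive :: "real \<Rightarrow> real^'d^'d \<Rightarrow> bool" where
  "sod_coercive q Q \<longleftrightarrow> (\<forall>X\<in>sod. q * (norm X)\<^sup>2 \<le> (Q ** X) \<bullet> X)"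

lemma sod_coercive_mono: "sod_coercive q Q \<Longrightarrow> q' \<le> q \<Longrightarrow> sod_coercive q' Q"
  unfolding sod_coercive_def by (meson mult_right_mono order_trans zero_le_power2)

lemma sod_coercive_perturb:
  fixes Q Qb :: "real^'d^'d"
  assumes "sod_coercive q Qb"
  shows "sod_coercive (q - norm (Q - Qb)) Q"
  unfolding sod_coercive_def
proof
  fix X :: "real^'d^'d" assume X: "X \<in> sod"
  have "\<bar>((Q - Qb) ** X) \<bullet> X\<bar> \<le> norm ((Q - Qb) ** X) * norm X"
    by (rule Cauchy_Schwarz_ineq2)
  also have "\<dots> \<le> norm (Q - Qb) * norm X * norm X"
    by (intro mult_right_mono norm_matrix_mult_le) simp
  finally have error: "- (((Q - Qb) ** X) \<bullet> X) \<le> norm (Q - Qb) * (norm X)\<^sup>2"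
    by (simp add: power2_eq_square mult.assoc)
  have "q * (norm X)\<^sup>2 \<le> (Qb ** X) \<bullet> X"
    using assms X by (simp add: sod_coercive_def)
  moreover have "(Q ** X) \<bullet> X = (Qb ** X) \<bullet> X + ((Q - Qb) ** X) \<bullet> X"
    by (simp add: matrix_diff_rdistrib inner_diff_left)
  ultimately show "(q - norm (Q - Qb)) * (norm X)\<^sup>2 \<le> (Q ** X) \<bullet> X"
    using error by (simp add: left_diff_distrib)
qed

lemma sod_coercive_diagonal:
  fixes Q :: "real^'d^'d"
  assumes "\<And>\<alpha> \<beta>. \<alpha> \<noteq> \<beta> \<Longrightarrow> Q $ \<alpha> $ \<beta> = 0" "\<And>\<alpha>. q \<le> Q $ \<alpha> $ \<alpha>"
  shows "sod_coercive q Q"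
  unfolding sod_coercive_def
proof
  fix X :: "real^'d^'d"
  have row: "(Q ** X) $ \<alpha> $ \<beta> = Q $ \<alpha> $ \<alpha> * X $ \<alpha> $ \<beta>" for \<alpha> \<beta>
  proof -
    have "(\<Sum>k\<in>UNIV. Q $ \<alpha> $ k * X $ k $ \<beta>) = (\<Sum>k\<in>UNIV. if k = \<alpha> then Q $ \<alpha> $ \<alpha> * X $ \<alpha> $ \<beta> else 0)"
      using assms(1) by (intro sum.cong) auto
    then show ?thesis
      by (simp add: matrix_matrix_mult_def)
  qed
  have "q * (norm X)\<^sup>2 = (\<Sum>\<alpha>\<in>UNIV. \<Sum>\<beta>\<in>UNIV. q * (X $ \<alpha> $ \<beta>)\<^sup>2)"
    by (simp add: norm_matrix_squared sum_distrib_left)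
  also have "\<dots> \<le> (\<Sum>\<alpha>\<in>UNIV. \<Sum>\<beta>\<in>UNIV. Q $ \<alpha> $ \<alpha> * (X $ \<alpha> $ \<beta>)\<^sup>2)"
    by (intro sum_mono mult_right_mono assms(2)) simp
  also have "\<dots> = (Q ** X) \<bullet> X"
    by (simp add: inner_matrix row power2_eq_square mult.assoc)
  finally show "q * (norm X)\<^sup>2 \<le> (Q ** X) \<bullet> X" .
qed

lemma linear_Phi: "linear (Phi Q)"
proof -
  have "linear (\<lambda>X. Q ** X)"
    by (rule linearI)
      (simp_all add: vec_eq_iff matrix_matrix_mult_def sum_distrib_left sum.distrib distrib_left mult_ac)
  moreover have "Phi Q = Proj \<circ> (\<lambda>X. Q ** X)"
    by (simp add: fun_eq_iff Phi_def)
  ultimately show ?thesis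
    using linear_compose linear_Proj by metis
qed

lemma Phi_in_sod: "Phi Q X \<in> sod"
  by (simp add: Phi_def Proj_in_sod)

lemma norm_Phi_ge:
  assumes "sod_coercive q Q" "X \<in> sod"
  shows "q * norm X \<le> norm (Phi Q X)"
proof (cases "X = 0")
  case False
  have "q * norm X * norm X \<le> (Q ** X) \<bullet> X"
    using assms by (simp add: sod_coercive_def power2_eq_square mult.assoc)
  also have "\<dots> = Phi Q X \<bullet> X"
    using assms(2) by (simp add: Phi_def inner_Proj_sod)
  also have "\<dots> \<le> norm (Phi Q X) * norm X"
    by (rule norm_cauchy_schwarz)
  finally show ?thesis
    using False by (simp add: mult_le_cancel_right_pos)
qed (simp add: linear_0[OF linear_Phi])

lemma bij_betw_Phi:
  fixes Q :: "real^'d^'d"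
  assumes "q > 0" "sod_coercive q Q"
  shows "bij_betw (Phi Q) sod sod"
proof -
  have "X = 0" if "X \<in> sod" "Phi Q X = 0" for X
  proof -
    have "q * norm X \<le> 0"
      using norm_Phi_ge[OF assms(2) that(1)] that(2) by simp
    then show ?thesis
      using assms(1) by (simp add: mult_le_0_iff)
  qed
  then have inj: "inj_on (Phi Q) sod"
    by (simp add: linear_inj_on_iff_eq_0[OF linear_Phi subspace_sod])
  have "inj_on (Phi Q) (span sod)"
    using inj by (simp only: span_eq_iff[THEN iffD2, OF subspace_sod])
  then have "dim (Phi Q ` sod) = dim (sod :: (real^'d^'d) set)"
    by (rule dim_image_eq[OF linear_Phi])
  then have "Phi Q ` sod = sod"
    by (intro subspace_dim_equal real_vector.linear_subspace_image[OF linear_Phi] subspace_sod)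
      (auto simp: Phi_in_sod)
  with inj show ?thesis
    by (simp add: bij_betw_def)
qed

lemma so_opnorm_le:
  assumes "C \<ge> 0" "\<And>X. X \<in> sod \<Longrightarrow> norm X \<le> 1 \<Longrightarrow> norm (T X) \<le> C"
  shows "so_opnorm T \<le> C"
  unfolding so_opnorm_def
proof (rule cSup_least)
  have "0 \<in> sod"
    using subspace_0[OF subspace_sod] .
  then show "(\<lambda>X. norm (T X)) ` {X \<in> sod. norm X \<le> 1} \<noteq> {}"
    by force
qed (use assms in auto)

lemma so_inv_in_sod: "bij_betw f sod sod \<Longrightarrow> Y \<in> sod \<Longrightarrow> so_inv f Y \<in> sod"
  by (auto simp: so_inv_def bij_betw_def intro: inv_into_into)

lemma so_inv_inverse: "bij_betw f sod sod \<Longrightarrow> Y \<in> sod \<Longrightarrow> f (so_inv f Y) = Y"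
  by (auto simp: so_inv_def bij_betw_def intro: f_inv_into_f)

lemma norm_so_inv_Phi_le:
  fixes Q :: "real^'d^'d"
  assumes "q > 0" "sod_coercive q Q" "Y \<in> sod"
  shows "norm (so_inv (Phi Q) Y) \<le> norm Y / q"
proof -
  have bij: "bij_betw (Phi Q) sod sod"
    using bij_betw_Phi assms(1,2) .
  have "q * norm (so_inv (Phi Q) Y) \<le> norm (Phi Q (so_inv (Phi Q) Y))"
    by (rule norm_Phi_ge[OF assms(2) so_inv_in_sod[OF bij assms(3)]])
  then show ?thesis
    using assms(1) by (simp add: so_inv_inverse[OF bij assms(3)] field_simps)
qed

lemma norm_so_inv_Phi_diff_le:
  fixes Q Qb :: "real^'d^'d"
  assumes "q > 0" "sod_coercive q Q" "qb > 0" "sod_coercive qb Qb" "Y \<in> sod"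
  shows "norm (so_inv (Phi Q) Y - so_inv (Phi Qb) Y) \<le> norm (Q - Qb) * norm Y / (q * qb)"
proof -
  define X Xb where "X = so_inv (Phi Q) Y" and "Xb = so_inv (Phi Qb) Y"
  have X: "X \<in> sod" "Phi Q X = Y"
    using so_inv_in_sod so_inv_inverse bij_betw_Phi[OF assms(1,2)] assms(5) by (auto simp: X_def)
  have Xb: "Xb \<in> sod" "Phi Qb Xb = Y"
    using so_inv_in_sod so_inv_inverse bij_betw_Phi[OF assms(3,4)] assms(5) by (auto simp: Xb_def)
  have "X - Xb \<in> sod"
    using subspace_diff[OF subspace_sod X(1) Xb(1)] .
  then have "qb * norm (X - Xb) \<le> norm (Phi Qb (X - Xb))"
    by (rule norm_Phi_ge[OF assms(4)])
  also have "Phi Qb (X - Xb) = Phi Qb X - Phi Q X"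
    using X(2) Xb(2) by (simp add: linear_diff[OF linear_Phi])
  also have "\<dots> = Proj ((Qb - Q) ** X)"
    by (simp add: Phi_def matrix_diff_rdistrib linear_diff[OF linear_Proj])
  also have "norm \<dots> \<le> norm (Q - Qb) * norm X"
    using norm_Proj_le[of "(Qb - Q) ** X"] norm_matrix_mult_le[of "Qb - Q" X]
    by (simp add: norm_minus_commute)
  also have "\<dots> \<le> norm (Q - Qb) * (norm Y / q)"
    unfolding X_def by (rule mult_left_mono[OF norm_so_inv_Phi_le[OF assms(1,2,5)] norm_ge_zero])
  finally show ?thesis
    using assms(1,3) by (simp add: X_def Xb_def field_simps)
qed

lemma Phi_perturbation:
  fixes Q Qb :: "real^'d^'d"
  assumes "q > 0" "sod_coercive q Qb" "norm (Q - Qb) \<le> q / 2"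
  shows "bij_betw (Phi Q) sod sod"
    and "so_opnorm (so_inv (Phi Q)) \<le> 2 / q"
    and "so_opnorm (\<lambda>Y. so_inv (Phi Q) Y - so_inv (Phi Qb) Y) \<le> 2 * norm (Q - Qb) / q\<^sup>2"
proof -
  have coercive: "sod_coercive (q / 2) Q"
    using sod_coercive_mono[OF sod_coercive_perturb[OF assms(2)]] assms(3) by simp
  have q2: "q / 2 > 0"
    using assms(1) by simp
  show "bij_betw (Phi Q) sod sod"
    by (rule bij_betw_Phi[OF q2 coercive])
  show "so_opnorm (so_inv (Phi Q)) \<le> 2 / q"
  proof (rule so_opnorm_le)
    fix Y :: "real^'d^'d" assume "Y \<in> sod" "norm Y \<le> 1"
    then show "norm (so_inv (Phi Q) Y) \<le> 2 / q"
      using norm_so_inv_Phi_le[OF q2 coercive] assms(1) by (force intro: order_trans divide_right_mono)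
  qed (use assms(1) in simp)
  show "so_opnorm (\<lambda>Y. so_inv (Phi Q) Y - so_inv (Phi Qb) Y) \<le> 2 * norm (Q - Qb) / q\<^sup>2"
  proof (rule so_opnorm_le)
    fix Y :: "real^'d^'d" assume Y: "Y \<in> sod" "norm Y \<le> 1"
    have "norm (so_inv (Phi Q) Y - so_inv (Phi Qb) Y) \<le> norm (Q - Qb) * norm Y / (q / 2 * q)"
      by (rule norm_so_inv_Phi_diff_le[OF q2 coercive assms(1,2) Y(1)])
    also have "\<dots> \<le> norm (Q - Qb) / (q / 2 * q)"
      using Y(2) assms(1) by (intro divide_right_mono mult_left_le) auto
    finally show "norm (so_inv (Phi Q) Y - so_inv (Phi Qb) Y) \<le> 2 * norm (Q - Qb) / q\<^sup>2"
      by (simp add: power2_eq_square ac_simps)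
  qed (use assms(1) in simp)
qed

lemma so_inv_Phi_uniform:
  fixes Q :: "'t \<Rightarrow> 'x \<Rightarrow> real^'d^'d"
  assumes q: "q > 0" "sod_coercive q Qb"
    and close: "\<And>\<delta>. \<delta> > 0 \<Longrightarrow> \<forall>\<^sub>F t in F. \<forall>x\<in>S t. norm (Q t x - Qb) \<le> \<delta>"
  shows "\<forall>\<^sub>F t in F. \<forall>x\<in>S t. bij_betw (Phi (Q t x)) sod sod \<and> so_opnorm (so_inv (Phi (Q t x))) \<le> 2 / q"
    and "e > 0 \<Longrightarrow> \<forall>\<^sub>F t in F. \<forall>x\<in>S t. bij_betw (Phi (Q t x)) sod sod \<and>
           so_opnorm (\<lambda>Y. so_inv (Phi (Q t x)) Y - so_inv (Phi Qb) Y) \<le> e"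
proof -
  show "\<forall>\<^sub>F t in F. \<forall>x\<in>S t. bij_betw (Phi (Q t x)) sod sod \<and> so_opnorm (so_inv (Phi (Q t x))) \<le> 2 / q"
    using close[of "q / 2"] q(1) by (auto elim!: eventually_mono intro: Phi_perturbation[OF q])
next
  assume "e > 0"
  define \<delta> where "\<delta> = min (q / 2) (e * q\<^sup>2 / 2)"
  have "\<delta> > 0"
    using q(1) \<open>e > 0\<close> by (simp add: \<delta>_def)
  have "2 * norm (Q' - Qb) / q\<^sup>2 \<le> e" if "norm (Q' - Qb) \<le> \<delta>" for Q'
    using that q(1) by (simp add: \<delta>_def field_simps)
  then show "\<forall>\<^sub>F t in F. \<forall>x\<in>S t. bij_betw (Phi (Q t x)) sod sod \<and>
      so_opnorm (\<lambda>Y. so_inv (Phi (Q t x)) Y - so_inv (Phi Qb) Y) \<le> e"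
    using close[OF \<open>\<delta> > 0\<close>]
    by (auto elim!: eventually_mono intro: Phi_perturbation(1)[OF q] order_trans[OF Phi_perturbation(3)[OF q]]
        simp: \<delta>_def)
qed

lemma Qmat_cong: "(\<And>i. i < N \<Longrightarrow> x i = x' i) \<Longrightarrow> Qmat N z x = Qmat N z x'"
  by (simp add: Qmat_def)

lemma Qmat_diff: "Qmat N z x - Qmat N z y = Qmat N z (\<lambda>i. x i - y i)"
  by (simp add: Qmat_def vec_eq_iff sum_subtractf right_diff_distrib)

lemma Qmat_add: "Qmat N z x + Qmat N z y = Qmat N z (\<lambda>i. x i + y i)"
  by (simp add: Qmat_def vec_eq_iff sum.distrib distrib_left)

lemma Qmat_const_centered: "centered N z \<Longrightarrow> Qmat N z (\<lambda>_. c) = 0"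
  unfolding centered_def Qmat_def
  by (simp add: vec_eq_iff sum_distrib_right[symmetric] flip: sum_component)

lemma Qmat_mult: "Qmat N z x ** A = Qmat N z (\<lambda>i. x i v* A)"
proof -
  have "(\<Sum>k\<in>UNIV. (\<Sum>i<N. z i $ a * x i $ k) * A $ k $ b)
      = (\<Sum>i<N. z i $ a * (\<Sum>k\<in>UNIV. x i $ k * A $ k $ b))" for a b
    by (simp add: sum_distrib_left sum_distrib_right mult.assoc) (rule sum.swap)
  then show ?thesis
    by (simp add: vec_eq_iff Qmat_def matrix_matrix_mult_def vector_matrix_mult_def)
qed

lemma orthogonal_matrix_vector_matrix:
  fixes \<theta> :: "real^'n^'n"
  assumes "orthogonal_matrix \<theta>"
  shows "(\<theta> *v v) v* \<theta> = v"
proof -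
  have "(\<theta> *v v) v* \<theta> = transpose \<theta> *v (\<theta> *v v)"
    by (rule transpose_matrix_vector[symmetric])
  also have "\<dots> = (transpose \<theta> ** \<theta>) *v v"
    by (rule matrix_vector_mul_assoc)
  finally show ?thesis
    using assms by (simp add: orthogonal_matrix)
qed

lemma Qmat_rigid_motion:
  assumes "centered N z" "orthogonal_matrix \<theta>" "\<And>i. i < N \<Longrightarrow> y i = \<theta> *v z i + \<eta>"
  shows "Qmat N z y ** \<theta> = Qmat N z z"
proof -
  have "Qmat N z y ** \<theta> = Qmat N z (\<lambda>i. z i + \<eta> v* \<theta>)"
    unfolding Qmat_mult using assms(2,3)
    by (intro Qmat_cong) (simp add: vector_matrix_left_distrib orthogonal_matrix_vector_matrix)
  also have "\<dots> = Qmat N z z"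
    using Qmat_add[of N z z "\<lambda>_. \<eta> v* \<theta>"] Qmat_const_centered[OF assms(1)] by simp
  finally show ?thesis .
qed

lemma Qmat_eq_sum_outer_prod: "Qmat N z x = (\<Sum>i<N. outer_prod (z i) (x i))"
  by (simp add: Qmat_def outer_prod_def vec_eq_iff sum_component)

lemma norm_Qmat_le: "norm (Qmat N z x) \<le> (\<Sum>i<N. norm (z i) * norm (x i))"
  unfolding Qmat_eq_sum_outer_prod norm_outer_prod[symmetric] by (rule norm_sum)

lemma proj_M_in_rig_motions:
  assumes "cbar_ok N z cb" "dist_M N z x \<le> cb"
  shows "proj_M N z x \<in> rig_motions N z"
proof -
  have "\<exists>!y. y \<in> rig_motions N z \<and> (\<forall>y'\<in>rig_motions N z. l2dist N x y \<le> l2dist N x y')"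
    using assms unfolding cbar_ok_def by blast
  from theI'[OF this] show ?thesis
    unfolding proj_M_def by blast
qed

lemma theta_of_rigid_motion:
  assumes "proj_M N z x \<in> rig_motions N z"
  shows "theta_of N z x \<in> SOd \<and> (\<exists>\<eta>. \<forall>i<N. proj_M N z x i = theta_of N z x *v z i + \<eta>)"
proof -
  have "\<exists>\<theta>. \<theta> \<in> SOd \<and> (\<exists>\<eta>. \<forall>i<N. proj_M N z x i = \<theta> *v z i + \<eta>)"
    using assms unfolding rig_motions_def by auto
  from someI_ex[OF this] show ?thesis
    unfolding theta_of_def .
qed

lemma maxdist_ge: "i < N \<Longrightarrow> norm (x i - y i) \<le> maxdist N x y"
  unfolding maxdist_def by (rule Max_ge) auto

lemma norm_Qmat_theta_of_diff_le:
  assumes "centered N z" "cbar_ok N z cb" "x \<in> Minf N z cb m"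
    and "\<And>i. i < N \<Longrightarrow> norm (z i) \<le> K"
  shows "norm (Qmat N z x ** theta_of N z x - Qmat N z z) \<le> N * K * m"
proof -
  let ?y = "proj_M N z x" and ?\<theta> = "theta_of N z x"
  have x: "dist_M N z x \<le> cb" "maxdist N x ?y \<le> m"
    using assms(3) by (auto simp: Minf_def)
  obtain \<eta> where \<theta>: "?\<theta> \<in> SOd" "\<And>i. i < N \<Longrightarrow> ?y i = ?\<theta> *v z i + \<eta>"
    using theta_of_rigid_motion[OF proj_M_in_rig_motions[OF assms(2) x(1)]] by blast
  have orth: "orthogonal_matrix ?\<theta>"
    using \<theta>(1) by (simp add: SOd_def)
  have "Qmat N z x ** ?\<theta> - Qmat N z z = Qmat N z (\<lambda>i. x i - ?y i) ** ?\<theta>"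
    by (simp add: Qmat_rigid_motion[OF assms(1) orth \<theta>(2), symmetric] Qmat_diff
        flip: matrix_diff_rdistrib)
  then have "norm (Qmat N z x ** ?\<theta> - Qmat N z z) = norm (Qmat N z (\<lambda>i. x i - ?y i))"
    by (simp add: norm_matrix_mult_orthogonal[OF orth])
  also have "\<dots> \<le> (\<Sum>i<N. norm (z i) * norm (x i - ?y i))"
    by (rule norm_Qmat_le)
  also have "\<dots> \<le> (\<Sum>i<N. K * m)"
  proof (intro sum_mono mult_mono)
    fix i assume "i \<in> {..<N}"
    then show "norm (z i) \<le> K" "norm (x i - ?y i) \<le> m" "0 \<le> K"
      using assms(4) order_trans[OF maxdist_ge x(2)] order_trans[OF norm_ge_zero] by auto
  qed simp
  finally show ?thesis
    by simp
qed

lemma norm_scaled_Qmat_theta_of_diff_le: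
  assumes "centered N z" "cbar_ok N z cb" "x \<in> Minf N z cb m"
    and "\<And>i. i < N \<Longrightarrow> norm (z i) \<le> K" "c \<ge> 0"
  shows "norm ((c *\<^sub>R Qmat N z x) ** theta_of N z x - Qb)
    \<le> c * (N * K * m) + norm (c *\<^sub>R Qmat N z z - Qb)"
proof -
  have "(c *\<^sub>R Qmat N z x) ** theta_of N z x - Qb
      = c *\<^sub>R (Qmat N z x ** theta_of N z x - Qmat N z z) + (c *\<^sub>R Qmat N z z - Qb)"
    by (simp add: scalar_matrix_assoc scaleR_diff_right)
  then have "norm ((c *\<^sub>R Qmat N z x) ** theta_of N z x - Qb)
      \<le> c * norm (Qmat N z x ** theta_of N z x - Qmat N z z) + norm (c *\<^sub>R Qmat N z z - Qb)"
    using assms(5) by (metis abs_of_nonneg norm_scaleR norm_triangle_ineq)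
  also have "\<dots> \<le> c * (N * K * m) + norm (c *\<^sub>R Qmat N z z - Qb)"
    using norm_Qmat_theta_of_diff_le[OF assms(1-4)] assms(5)
    by (intro add_right_mono mult_left_mono)
  finally show ?thesis .
qed

lemma Minf_mono: "m \<le> m' \<Longrightarrow> Minf N z cb m \<subseteq> Minf N z cb m'"
  by (auto simp: Minf_def)

section \<open>Weak limits of point measures with bounded support\<close>

lemma continuous_bounded_extension:
  fixes f :: "'a::euclidean_space \<Rightarrow> real" and R :: real
  assumes "continuous_on UNIV f"
  obtains g where "continuous_on UNIV g" "bounded (range g)" "\<And>y. norm y \<le> R \<Longrightarrow> g y = f y"
proof -
  obtain a :: 'a where a: "cball 0 R \<subseteq> cbox (- a) a"
    using bounded_subset_cbox_symmetric[OF bounded_cball] .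
  have f: "continuous_on (cbox (- a) a) f"
    using assms by (rule continuous_on_subset) simp
  show ?thesis
  proof
    show "continuous_on UNIV (\<lambda>y. f (clamp (- a) a y))"
      by (rule clamp_continuous_on[OF f])
    show "bounded (range (\<lambda>y. f (clamp (- a) a y)))"
      by (intro clamp_bounded compact_imp_bounded compact_continuous_image f compact_cbox)
    show "f (clamp (- a) a y) = f y" if "norm y \<le> R" for y
      using a that by (simp add: subset_iff)
  qed
qed

text \<open>Weak convergence is only assumed for bounded test functions; since the points stay in a
  fixed ball, it extends to all continuous ones, such as the second moments.\<close>

locale supported_weak_limit =
  fixes F :: "'t filter" and w :: "'t \<Rightarrow> real" and n :: "'t \<Rightarrow> nat"
    and p :: "'t \<Rightarrow> nat \<Rightarrow> 'a::euclidean_space" and \<rho> :: "'a \<Rightarrow> real" and R :: real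
  assumes nontrivial: "F \<noteq> bot"
    and density: "\<rho> \<in> borel_measurable lborel" "\<And>y. \<rho> y \<ge> 0" "integrable lborel \<rho>"
    and weak: "\<And>f. continuous_on UNIV f \<Longrightarrow> bounded (range f) \<Longrightarrow>
        ((\<lambda>t. w t * (\<Sum>i<n t. f (p t i))) \<longlongrightarrow> (LINT y|lborel. f y * \<rho> y)) F"
    and points_in_cball: "\<forall>\<^sub>F t in F. \<forall>i<n t. norm (p t i) \<le> R"
begin

lemma measurable_continuous_density:
  assumes "continuous_on UNIV f"
  shows "(\<lambda>y. f y * \<rho> y) \<in> borel_measurable lborel"
proof -
  have "f \<in> borel_measurable lborel"
    using borel_measurable_continuous_onI[OF assms] by simp
  then show ?thesis
    using density(1) by (rule borel_measurable_times)
qed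

lemma density_vanishes_outside_cball: "AE y in lborel. R < norm y \<longrightarrow> \<rho> y = 0"
proof -
  define g where "g y = min 1 (max 0 (norm y - R))" for y :: 'a
  have g: "continuous_on UNIV g" "\<And>y. \<bar>g y\<bar> \<le> 1"
    by (auto simp: g_def intro!: continuous_intros)
  then have "((\<lambda>t. w t * (\<Sum>i<n t. g (p t i))) \<longlongrightarrow> (LINT y|lborel. g y * \<rho> y)) F"
    by (intro weak) (auto simp: bounded_iff)
  moreover have "\<forall>\<^sub>F t in F. w t * (\<Sum>i<n t. g (p t i)) = 0"
    using points_in_cball by eventually_elim (simp add: g_def)
  then have "((\<lambda>t. w t * (\<Sum>i<n t. g (p t i))) \<longlongrightarrow> 0) F"
    by (rule tendsto_eventually)
  ultimately have "(LINT y|lborel. g y * \<rho> y) = 0"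
    by (rule tendsto_unique[OF nontrivial])
  moreover have "integrable lborel (\<lambda>y. g y * \<rho> y)"
    using g(2) density(2)
    by (intro Bochner_Integration.integrable_bound[OF density(3) measurable_continuous_density[OF g(1)]])
      (auto simp: abs_mult intro!: mult_left_le_one_le)
  ultimately have "AE y in lborel. g y * \<rho> y = 0"
    using density(2) by (subst (asm) integral_nonneg_eq_0_iff_AE) (auto simp: g_def)
  then show ?thesis
    by eventually_elim (auto simp: g_def)
qed

lemma AE_eq_on_cball:
  assumes "\<And>y. norm y \<le> R \<Longrightarrow> g y = f y"
  shows "AE y in lborel. g y * \<rho> y = f y * \<rho> y"
  using density_vanishes_outside_cball
proof eventually_elim
  case (elim y)
  then show ?case
    using assms by (cases "norm y \<le> R") auto
qed

lemma tendsto_continuous: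
  assumes "continuous_on UNIV f"
  shows "((\<lambda>t. w t * (\<Sum>i<n t. f (p t i))) \<longlongrightarrow> (LINT y|lborel. f y * \<rho> y)) F"
proof -
  obtain g where g: "continuous_on UNIV g" "bounded (range g)" "\<And>y. norm y \<le> R \<Longrightarrow> g y = f y"
    using continuous_bounded_extension[OF assms] by blast
  have "((\<lambda>t. w t * (\<Sum>i<n t. g (p t i))) \<longlongrightarrow> (LINT y|lborel. g y * \<rho> y)) F"
    by (rule weak[OF g(1,2)])
  moreover have "\<forall>\<^sub>F t in F. w t * (\<Sum>i<n t. g (p t i)) = w t * (\<Sum>i<n t. f (p t i))"
    using points_in_cball by eventually_elim (simp add: g(3))
  moreover have "(LINT y|lborel. g y * \<rho> y) = (LINT y|lborel. f y * \<rho> y)"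
    by (intro integral_cong_AE measurable_continuous_density AE_eq_on_cball g(1,3) assms)
  ultimately show ?thesis
    by (simp add: tendsto_cong)
qed

lemma integrable_continuous:
  assumes "continuous_on UNIV f"
  shows "integrable lborel (\<lambda>y. f y * \<rho> y)"
proof -
  obtain g where g: "continuous_on UNIV g" "bounded (range g)" "\<And>y. norm y \<le> R \<Longrightarrow> g y = f y"
    using continuous_bounded_extension[OF assms] by blast
  obtain B where B: "\<And>y. \<bar>g y\<bar> \<le> B"
    using g(2) by (auto simp: bounded_iff)
  have "integrable lborel (\<lambda>y. g y * \<rho> y)"
    using B density(2)
    by (intro Bochner_Integration.integrable_bound[OF integrable_mult_right[OF density(3), of B]
          measurable_continuous_density[OF g(1)]])
      (auto simp: abs_mult intro!: mult_right_mono intro: order_trans[OF _ abs_ge_self])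
  then show ?thesis
    by (rule integrable_cong_AE_imp[OF _ measurable_continuous_density[OF assms] AE_eq_on_cball[OF g(3)]])
qed

end

lemma second_moment_pos:
  fixes \<rho> :: "real^'n \<Rightarrow> real"
  assumes "\<rho> \<in> borel_measurable lborel" "\<And>y. \<rho> y \<ge> 0"
    and "integrable lborel (\<lambda>y. y $ a * y $ a * \<rho> y)" "(LINT y|lborel. \<rho> y) > 0"
  shows "(LINT y|lborel. y $ a * y $ a * \<rho> y) > 0"
proof (rule ccontr)
  assume "\<not> ?thesis"
  moreover have "0 \<le> (LINT y|lborel. y $ a * y $ a * \<rho> y)"
    using assms(2) by (simp add: integral_nonneg_AE)
  ultimately have "(LINT y|lborel. y $ a * y $ a * \<rho> y) = 0"
    by simp
  then have moment_zero: "AE y in lborel. y $ a * y $ a * \<rho> y = 0"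
    using assms(2) by (subst (asm) integral_nonneg_eq_0_iff_AE[OF assms(3)]) auto
  have "{y::real^'n. y $ a = 0} \<in> null_sets lebesgue"
    using negligible_standard_hyperplane_cart[of a] negligible_iff_null_sets by blast
  moreover have "{y::real^'n. y $ a = 0} \<in> sets lborel"
    by measurable
  ultimately have "{y::real^'n. y $ a = 0} \<in> null_sets lborel"
    using null_sets_completion_iff by blast
  then have "AE y in lborel. y \<notin> {y::real^'n. y $ a = 0}"
    by (rule AE_not_in)
  then have "AE y in lborel. (y::real^'n) $ a \<noteq> 0"
    by simp
  with moment_zero have "AE y in lborel. \<rho> y = 0"
    by eventually_elim simp
  then have "(LINT y|lborel. \<rho> y) = 0"
    using integral_cong_AE[OF assms(1) borel_measurable_const] by simp
  with assms(4) show False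
    by simp
qed

lemma rescaled_points_supported_weak_limit:
  fixes z :: "real \<Rightarrow> nat \<Rightarrow> real^'d"
  assumes bound: "\<And>\<epsilon> i. 0 < \<epsilon> \<Longrightarrow> \<epsilon> < 1 \<Longrightarrow> i < N \<epsilon> \<Longrightarrow> norm (z \<epsilon> i) \<le> R / \<epsilon>"
    and "\<rho> \<in> borel_measurable lborel" "\<And>y. \<rho> y \<ge> 0" "integrable lborel \<rho>"
    and "\<And>f :: real^'d \<Rightarrow> real. continuous_on UNIV f \<Longrightarrow> bounded (range f) \<Longrightarrow>
        ((\<lambda>\<epsilon>. \<epsilon> ^ CARD('d) * (\<Sum>i<N \<epsilon>. f (\<epsilon> *\<^sub>R z \<epsilon> i)))
           \<longlongrightarrow> (LINT y|lborel. f y * \<rho> y)) (at_right 0)"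
  shows "supported_weak_limit (at_right 0) (\<lambda>\<epsilon>. \<epsilon> ^ CARD('d)) N (\<lambda>\<epsilon> i. \<epsilon> *\<^sub>R z \<epsilon> i) \<rho> R"
proof -
  have "norm (\<epsilon> *\<^sub>R z \<epsilon> i) \<le> R" if "0 < \<epsilon>" "\<epsilon> < 1" "i < N \<epsilon>" for \<epsilon> i
    using bound[OF that] that by (simp add: field_simps)
  then have "\<forall>\<^sub>F \<epsilon> in at_right 0. \<forall>i<N \<epsilon>. norm (\<epsilon> *\<^sub>R z \<epsilon> i) \<le> R"
    by (auto simp: eventually_at_right_field intro: exI[of _ 1])
  with assms(2-) show ?thesis
    by unfold_locales auto
qed

lemma Qbar_sod_coercive:
  fixes \<rho> :: "real^'d \<Rightarrow> real"
  assumes "supported_weak_limit F w n p \<rho> R" "(LINT y|lborel. \<rho> y) > 0"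
    and "\<And>\<alpha> \<beta>. \<alpha> \<noteq> \<beta> \<Longrightarrow> Qbar \<rho> $ \<alpha> $ \<beta> = 0"
  obtains q where "q > 0" "sod_coercive q (Qbar \<rho>)"
proof -
  interpret supported_weak_limit F w n p \<rho> R
    by (rule assms(1))
  have "0 < Qbar \<rho> $ \<alpha> $ \<alpha>" for \<alpha>
    using second_moment_pos[OF density(1,2) integrable_continuous[of "\<lambda>y. y $ \<alpha> * y $ \<alpha>"] assms(2)]
    by (simp add: Qbar_def continuous_intros)
  then show ?thesis
    using assms(3) by (intro that[of "Min (range (\<lambda>\<alpha>. Qbar \<rho> $ \<alpha> $ \<alpha>))"] sod_coercive_diagonal) auto
qed

lemma scaled_Qmat_tendsto_Qbar:
  fixes z :: "real \<Rightarrow> nat \<Rightarrow> real^'d"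
  assumes "supported_weak_limit (at_right 0) (\<lambda>\<epsilon>. \<epsilon> ^ CARD('d)) N (\<lambda>\<epsilon> i. \<epsilon> *\<^sub>R z \<epsilon> i) \<rho> R"
  shows "((\<lambda>\<epsilon>. \<epsilon> ^ (CARD('d) + 2) *\<^sub>R Qmat (N \<epsilon>) (z \<epsilon>) (z \<epsilon>)) \<longlongrightarrow> Qbar \<rho>) (at_right 0)"
proof -
  interpret supported_weak_limit "at_right 0" "\<lambda>\<epsilon>. \<epsilon> ^ CARD('d)" N "\<lambda>\<epsilon> i. \<epsilon> *\<^sub>R z \<epsilon> i" \<rho> R
    by (rule assms)
  have "((\<lambda>\<epsilon>. (\<epsilon> ^ (CARD('d) + 2) *\<^sub>R Qmat (N \<epsilon>) (z \<epsilon>) (z \<epsilon>)) $ \<alpha> $ \<beta>) \<longlongrightarrow> Qbar \<rho> $ \<alpha> $ \<beta>)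
      (at_right 0)" for \<alpha> \<beta>
  proof -
    have "(\<lambda>\<epsilon>. (\<epsilon> ^ (CARD('d) + 2) *\<^sub>R Qmat (N \<epsilon>) (z \<epsilon>) (z \<epsilon>)) $ \<alpha> $ \<beta>)
        = (\<lambda>\<epsilon>. \<epsilon> ^ CARD('d) * (\<Sum>i<N \<epsilon>. (\<epsilon> *\<^sub>R z \<epsilon> i) $ \<alpha> * (\<epsilon> *\<^sub>R z \<epsilon> i) $ \<beta>))"
      by (simp add: fun_eq_iff Qmat_def sum_distrib_left power_add power2_eq_square mult_ac)
    moreover have "continuous_on UNIV (\<lambda>y::real^'d. y $ \<alpha> * y $ \<beta>)"
      by (intro continuous_intros)
    ultimately show ?thesis
      using tendsto_continuous[of "\<lambda>y. y $ \<alpha> * y $ \<beta>"] by (simp add: Qbar_def)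
  qed
  then show ?thesis
    by (intro vec_tendstoI)
qed

lemma scaled_Qmat_theta_of_tendsto_uniform:
  fixes z :: "real \<Rightarrow> nat \<Rightarrow> real^'d"
  assumes centered: "\<And>\<epsilon>. 0 < \<epsilon> \<Longrightarrow> \<epsilon> < 1 \<Longrightarrow> centered (N \<epsilon>) (z \<epsilon>)"
    and cb: "\<And>\<epsilon>. 0 < \<epsilon> \<Longrightarrow> \<epsilon> < 1 \<Longrightarrow> cbar_ok (N \<epsilon>) (z \<epsilon>) (cbar \<epsilon>)"
    and bound: "\<And>\<epsilon> i. 0 < \<epsilon> \<Longrightarrow> \<epsilon> < 1 \<Longrightarrow> i < N \<epsilon> \<Longrightarrow> norm (z \<epsilon> i) \<le> R / \<epsilon>"
    and Qlim: "((\<lambda>\<epsilon>. \<epsilon> ^ (CARD('d) + 2) *\<^sub>R Qmat (N \<epsilon>) (z \<epsilon>) (z \<epsilon>)) \<longlongrightarrow> Qb) (at_right 0)"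
    and mass: "((\<lambda>\<epsilon>. \<epsilon> ^ CARD('d) * N \<epsilon>) \<longlongrightarrow> M) (at_right 0)"
    and "\<nu> > 0" "\<delta> > 0"
  shows "\<forall>\<^sub>F \<epsilon> in at_right 0. \<forall>x\<in>Minf (N \<epsilon>) (z \<epsilon>) (cbar \<epsilon>) (min (\<epsilon> powr (\<nu> - 1)) (cbar \<epsilon>)).
    norm ((\<epsilon> ^ (CARD('d) + 2) *\<^sub>R Qmat (N \<epsilon>) (z \<epsilon>) x) ** theta_of (N \<epsilon>) (z \<epsilon>) x - Qb) \<le> \<delta>"
proof -
  define bound_at where "bound_at \<epsilon> =
    R * (\<epsilon> ^ CARD('d) * N \<epsilon>) * \<epsilon> powr \<nu> + norm (\<epsilon> ^ (CARD('d) + 2) *\<^sub>R Qmat (N \<epsilon>) (z \<epsilon>) (z \<epsilon>) - Qb)"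
    for \<epsilon>
  have "((\<lambda>\<epsilon>::real. \<epsilon> powr \<nu>) \<longlongrightarrow> 0) (at_right 0)"
    by (rule tendsto_zero_powrI[of "\<lambda>x. x" _ "\<lambda>_. \<nu>" \<nu>])
      (auto simp: \<open>\<nu> > 0\<close> eventually_at_right_field intro: tendsto_ident_at exI[of _ 1])
  then have "(bound_at \<longlongrightarrow> R * M * 0 + norm (Qb - Qb)) (at_right 0)"
    unfolding bound_at_def by (intro tendsto_intros Qlim mass)
  then have "\<forall>\<^sub>F \<epsilon> in at_right 0. bound_at \<epsilon> < \<delta>"
    using \<open>\<delta> > 0\<close> by (simp add: order_tendstoD(2))
  moreover have "\<forall>\<^sub>F \<epsilon> in at_right (0::real). 0 < \<epsilon> \<and> \<epsilon> < 1"
    by (auto simp: eventually_at_right_field intro: exI[of _ 1])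
  ultimately show ?thesis
  proof eventually_elim
    case (elim \<epsilon>)
    then have \<epsilon>: "0 < \<epsilon>" "\<epsilon> < 1" by auto
    let ?c = "\<epsilon> ^ (CARD('d) + 2)" and ?\<theta> = "theta_of (N \<epsilon>) (z \<epsilon>)" and ?Q = "Qmat (N \<epsilon>) (z \<epsilon>)"
    have scaling: "?c * (N \<epsilon> * (R / \<epsilon>) * \<epsilon> powr (\<nu> - 1)) = R * (\<epsilon> ^ CARD('d) * N \<epsilon>) * \<epsilon> powr \<nu>"
      using \<epsilon> by (simp add: powr_diff power_add power2_eq_square field_simps)
    show ?case
    proof
      fix x assume "x \<in> Minf (N \<epsilon>) (z \<epsilon>) (cbar \<epsilon>) (min (\<epsilon> powr (\<nu> - 1)) (cbar \<epsilon>))"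
      then have x: "x \<in> Minf (N \<epsilon>) (z \<epsilon>) (cbar \<epsilon>) (\<epsilon> powr (\<nu> - 1))"
        using Minf_mono[OF min.cobounded1] by blast
      have "norm ((?c *\<^sub>R ?Q x) ** ?\<theta> x - Qb)
          \<le> ?c * (N \<epsilon> * (R / \<epsilon>) * \<epsilon> powr (\<nu> - 1)) + norm (?c *\<^sub>R ?Q (z \<epsilon>) - Qb)"
        using \<epsilon> by (intro norm_scaled_Qmat_theta_of_diff_le[OF centered[OF \<epsilon>] cb[OF \<epsilon>] x bound[OF \<epsilon>]])
          auto
      also have "\<dots> = bound_at \<epsilon>"
        unfolding bound_at_def scaling ..
      finally show "norm ((?c *\<^sub>R ?Q x) ** ?\<theta> x - Qb) \<le> \<delta>"
        using elim by simp
    qed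
  qed
qed

lemma Phi_eps_eq:
  fixes z :: "nat \<Rightarrow> real^'d"
  shows "Phi_eps \<epsilon> N z x = Phi ((\<epsilon> ^ (CARD('d) + 2) *\<^sub>R Qmat N z x) ** theta_of N z x)"
  by (simp add: fun_eq_iff Phi_eps_def Phi_def)

lemma eventually_at_right_0_imp_le:
  assumes "\<forall>\<^sub>F \<epsilon> in at_right (0::real). P \<epsilon>"
  shows "\<exists>\<epsilon>0>0. \<epsilon>0 < 1 \<and> (\<forall>\<epsilon>. 0 < \<epsilon> \<and> \<epsilon> \<le> \<epsilon>0 \<longrightarrow> P \<epsilon>)"
proof -
  obtain b where "b > 0" "\<And>\<epsilon>. 0 < \<epsilon> \<Longrightarrow> \<epsilon> < b \<Longrightarrow> P \<epsilon>"
    using assms unfolding eventually_at_right_field by auto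
  then show ?thesis
    by (intro exI[of _ "min (b / 2) (1 / 2)"]) auto
qed

theorem lemma5p1:
  fixes a b R :: real
    and N :: "real \<Rightarrow> nat"
    and z :: "real \<Rightarrow> nat \<Rightarrow> real^'d"
    and cbar :: "real \<Rightarrow> real"
    and \<rho> :: "real^'d \<Rightarrow> real"
  assumes ab: "a > 0" "b > 0"
    and cryst: "\<And>\<epsilon>. 0 < \<epsilon> \<Longrightarrow> \<epsilon> < 1 \<Longrightarrow>
        crystal a b (N \<epsilon>) (z \<epsilon>) \<and> centered (N \<epsilon>) (z \<epsilon>) \<and> inf_rigid a (N \<epsilon>) (z \<epsilon>)"
    and cb: "\<And>\<epsilon>. 0 < \<epsilon> \<Longrightarrow> \<epsilon> < 1 \<Longrightarrow> cbar_ok (N \<epsilon>) (z \<epsilon>) (cbar \<epsilon>)"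
    and R: "R > 0" "\<And>\<epsilon> i. 0 < \<epsilon> \<Longrightarrow> \<epsilon> < 1 \<Longrightarrow> i < N \<epsilon> \<Longrightarrow> norm (z \<epsilon> i) \<le> R / \<epsilon>"
    and rho: "\<rho> \<in> borel_measurable lborel" "\<And>y. \<rho> y \<ge> 0" "integrable lborel \<rho>"
    and weak: "\<And>f :: real^'d \<Rightarrow> real. continuous_on UNIV f \<Longrightarrow> bounded (range f) \<Longrightarrow>
        ((\<lambda>\<epsilon>. \<epsilon> ^ CARD('d) * (\<Sum>i<N \<epsilon>. f (\<epsilon> *\<^sub>R z \<epsilon> i)))
           \<longlongrightarrow> (LINT y|lborel. f y * \<rho> y)) (at_right 0)"
    and mass: "(LINT y|lborel. \<rho> y) > 0"
    and diag: "\<And>\<alpha> \<beta>. \<alpha> \<noteq> \<beta> \<Longrightarrow> Qbar \<rho> $ \<alpha> $ \<beta> = 0"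
  shows
    "(\<forall>\<nu>>0. \<exists>\<epsilon>0>0. \<epsilon>0 < 1 \<and> (\<exists>C. \<forall>\<epsilon>. 0 < \<epsilon> \<and> \<epsilon> \<le> \<epsilon>0 \<longrightarrow>
        (\<forall>x\<in>Minf (N \<epsilon>) (z \<epsilon>) (cbar \<epsilon>) (min (\<epsilon> powr (\<nu> - 1)) (cbar \<epsilon>)).
           bij_betw (Phi_eps \<epsilon> (N \<epsilon>) (z \<epsilon>) x) sod sod \<and>
           so_opnorm (so_inv (Phi_eps \<epsilon> (N \<epsilon>) (z \<epsilon>) x)) \<le> C)))
     \<and>
     (\<forall>\<nu>>0. bij_betw (Phi (Qbar \<rho>)) sod sod \<and>
        (\<forall>e>0. \<forall>\<^sub>F \<epsilon> in at_right 0.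
           \<forall>x\<in>Minf (N \<epsilon>) (z \<epsilon>) (cbar \<epsilon>) (min (\<epsilon> powr (\<nu> - 1)) (cbar \<epsilon>)).
             bij_betw (Phi_eps \<epsilon> (N \<epsilon>) (z \<epsilon>) x) sod sod \<and>
             so_opnorm (\<lambda>X. so_inv (Phi_eps \<epsilon> (N \<epsilon>) (z \<epsilon>) x) X - so_inv (Phi (Qbar \<rho>)) X) \<le> e))"
proof -
  have weak_limit: "supported_weak_limit (at_right 0) (\<lambda>\<epsilon>. \<epsilon> ^ CARD('d)) N (\<lambda>\<epsilon> i. \<epsilon> *\<^sub>R z \<epsilon> i) \<rho> R"
    by (rule rescaled_points_supported_weak_limit[OF R(2) rho weak])
  interpret supported_weak_limit "at_right 0" "\<lambda>\<epsilon>. \<epsilon> ^ CARD('d)" N "\<lambda>\<epsilon> i. \<epsilon> *\<^sub>R z \<epsilon> i" \<rho> R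
    by (rule weak_limit)
  have mass_lim: "((\<lambda>\<epsilon>. \<epsilon> ^ CARD('d) * real (N \<epsilon>)) \<longlongrightarrow> (LINT y|lborel. \<rho> y)) (at_right 0)"
    using tendsto_continuous[of "\<lambda>_. 1"] by simp
  obtain q where q: "q > 0" "sod_coercive q (Qbar \<rho>)"
    using Qbar_sod_coercive[OF weak_limit mass diag] .
  have close: "\<And>\<delta>. \<delta> > 0 \<Longrightarrow> \<forall>\<^sub>F \<epsilon> in at_right 0.
      \<forall>x\<in>Minf (N \<epsilon>) (z \<epsilon>) (cbar \<epsilon>) (min (\<epsilon> powr (\<nu> - 1)) (cbar \<epsilon>)).
        norm ((\<epsilon> ^ (CARD('d) + 2) *\<^sub>R Qmat (N \<epsilon>) (z \<epsilon>) x) ** theta_of (N \<epsilon>) (z \<epsilon>) x - Qbar \<rho>) \<le> \<delta>"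
    if "\<nu> > 0" for \<nu>
    using cryst cb
    by (intro scaled_Qmat_theta_of_tendsto_uniform[OF _ _ R(2) scaled_Qmat_tendsto_Qbar[OF weak_limit]
          mass_lim that]) blast+
  show ?thesis
    unfolding Phi_eps_eq
    apply (intro conjI allI impI)
    subgoal premises \<nu> for \<nu>
      using eventually_at_right_0_imp_le[OF so_inv_Phi_uniform(1)[OF q close[OF \<nu>]]] by blast
    subgoal
      by (rule bij_betw_Phi[OF q])
    subgoal premises \<nu>e for \<nu> e
      using so_inv_Phi_uniform(2)[OF q close[OF \<nu>e(1)] \<nu>e(2)] .
    done
qed

end
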